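(* Assume claims arrive according to a fractional Poisson process with parameters $\lambda>0$, $0<\alpha\le1$, and the delays are exponential: $\overline W(x)=e^{-\beta x}$, $x\ge0$, $\beta>0$. Then for $t>0$, $$\mathbb{E}[Z(t)]=\frac{\mu_1\lambda e^{-\beta t}t^\alpha}{\Gamma(1+\alpha)}\,{}_1F_1(\alpha,1+\alpha,\beta t)=\mu_1e^{-\beta t}{}_1F_1(\alpha,1+\alpha,\beta t)\,m(t),$$ and for $\delta>0$, $$\mathbb{E}[Z_\delta(t)]=\frac{\mu_1\lambda\,\mathbb{E}[e^{-\delta L}]\,e^{-(\beta+\delta)t}t^\alpha}{\Gamma(1+\alpha)}\,{}_1F_1(\alpha,1+\alpha,\beta t),$$ where $\mathbb{E}[e^{-\delta L}]=\beta/(\beta+\delta)$. Moreover, as $t\to\infty$, $$\mathbb{E}[Z(t)]\sim\frac{\mu_1\lambda}{\beta\Gamma(\alpha)}t^{\alpha-1}=\mu_1\mathbb{E}[L]m'(t),\qquad \mathbb{E}[Z_\delta(t)]\sim\frac{\mu_1\lambda\,\mathbb{E}[e^{-\delta L}]}{\beta\Gamma(\alpha)}e^{-\delta t}t^{\alpha-1}.$$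
   Context: Claims arrive according to a renewal process with arrival times $T_1<T_2<\dots$; here it is the fractional Poisson process with parameters $\lambda>0$ and $0<\alpha\le1$, i.e. the renewal process (with Mittag-Leffler interarrival times) whose renewal function is $m(t)=\mathbb{E}[N(t)]=\lambda t^\alpha/\Gamma(1+\alpha)$, so $m'(t)=\lambda t^{\alpha-1}/\Gamma(\alpha)$, $t>0$. Claim amounts $X_i$ are i.i.d. with $\mu_k:=\mathbb{E}[X^k]$; delays $L_i$ are i.i.d. with generic copy $L$ and survival function $\overline W$; arrivals, amounts and delays are mutually independent. For $\delta\ge0$, $Z_\delta(t):=\sum_{i\ge1}e^{-\delta(T_i+L_i)}\mathbf{1}_{\{T_i\le t<T_i+L_i\}}X_i$, $Z:=Z_0$. ${}_1F_1(a,b,z)=\sum_{n\ge0}\frac{(a)_n}{(b)_n}\frac{z^n}{n!}$ is Kummer's confluent hypergeometric function, $(a)_n=a(a+1)\cdots(a+n-1)$, $(a)_0=1$. $g_1(t)\sim g_2(t)$ means $g_1(t)/g_2(t)\to1$. *)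

theory Defs
  imports "HOL-Probability.Probability" "HOL-Library.Landau_Symbols"
begin

definition mittag_leffler :: "real \<Rightarrow> real \<Rightarrow> real" where
  "mittag_leffler \<alpha> z = (\<Sum>k. z ^ k / Gamma (\<alpha> * real k + 1))"

definition hyp1F1 :: "real \<Rightarrow> real \<Rightarrow> real \<Rightarrow> real" where
  "hyp1F1 a b z = (\<Sum>n. pochhammer a n / pochhammer b n * z ^ n / fact n)"

text \<open>Arrival times: index i (from 0) corresponds to T_(i+1) = J_0 + ... + J_i,
  where J_0, J_1, ... are the interarrival times.\<close>
definition arrival_time :: "(nat \<Rightarrow> 'a \<Rightarrow> real) \<Rightarrow> nat \<Rightarrow> 'a \<Rightarrow> real" where
  "arrival_time J i \<omega> = (\<Sum>k\<le>i. J k \<omega>)"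

definition fpp_renewal_fun :: "real \<Rightarrow> real \<Rightarrow> real \<Rightarrow> real" where
  "fpp_renewal_fun lam \<alpha> t = lam * t powr \<alpha> / Gamma (1 + \<alpha>)"

text \<open>Fractional Poisson process (as a renewal process): i.i.d. interarrival times with
  Mittag-Leffler survival function P(J > t) = E_alpha(-lam t^alpha), whose renewal function
  E[N(t)] = E[sum_i 1{T_i <= t}] equals lam t^alpha / Gamma(1+alpha).\<close>
definition fractional_poisson_renewal ::
  "'a measure \<Rightarrow> real \<Rightarrow> real \<Rightarrow> (nat \<Rightarrow> 'a \<Rightarrow> real) \<Rightarrow> bool" where
  "fractional_poisson_renewal M lam \<alpha> J \<longleftrightarrow>
     (\<forall>i. J i \<in> borel_measurable M) \<and>
     prob_space.indep_vars M (\<lambda>_. borel) J UNIV \<and>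
     (\<forall>i. distr M borel (J i) = distr M borel (J 0)) \<and>
     (\<forall>t\<ge>0. measure M {\<omega> \<in> space M. J 0 \<omega> > t} = mittag_leffler \<alpha> (- (lam * t powr \<alpha>))) \<and>
     (\<forall>t\<ge>0. (\<integral>\<^sup>+ \<omega>. (\<Sum>i. indicator {\<omega> \<in> space M. arrival_time J i \<omega> \<le> t} \<omega>) \<partial>M)
              = ennreal (fpp_renewal_fun lam \<alpha> t))"

definition Zdelta ::
  "(nat \<Rightarrow> 'a \<Rightarrow> real) \<Rightarrow> (nat \<Rightarrow> 'a \<Rightarrow> real) \<Rightarrow> (nat \<Rightarrow> 'a \<Rightarrow> real) \<Rightarrow> real \<Rightarrow> real \<Rightarrow> 'a \<Rightarrow> real"
  where
  "Zdelta J X L \<delta> t \<omega> = (\<Sum>i. (if arrival_time J i \<omega> \<le> t \<and> t < arrival_time J i \<omega> + L i \<omega>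
        then exp (- \<delta> * (arrival_time J i \<omega> + L i \<omega>)) * X i \<omega> else 0))"

end

theory Submission
  imports Defs "HOL-Real_Asymp.Real_Asymp"
begin

text \<open>
  The claim \<open>X i\<close> contributes \<open>X i * w (T i) (L i)\<close> to \<open>Z\<^sub>\<delta>(t)\<close>, where
  \<open>w s l = exp (-\<delta> (s + l)) * 1{s \<le> t < s + l}\<close>. By independence,
  \<open>E Z\<^sub>\<delta>(t) = \<mu>\<^sub>1 * \<Sum>\<^sub>i E w (T i) (L i)\<close>, and integrating out the exponential delay
  gives \<open>E w s L = \<beta> / (\<beta> + \<delta>) * exp (-(\<beta> + \<delta>) t) * exp (\<beta> s) * 1{s \<le> t}\<close>.
  The renewal identity \<open>E N(s) = m(s)\<close> determines the intensity measure of the arrivals,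
  namely \<open>m'(s) ds\<close>, so by Campbell's formula the sum equals
  \<open>\<lambda> / \<Gamma>(\<alpha>) * \<integral>\<^sub>0\<^sup>t exp (\<beta> s) s\<^sup>\<alpha>\<^sup>-\<^sup>1 ds\<close>. Integrating the exponential series
  termwise identifies this integral with \<open>t\<^sup>\<alpha> / \<alpha> * \<^sub>1F\<^sub>1(\<alpha>, 1 + \<alpha>, \<beta> t)\<close>, and
  l'Hopital's rule applied to the integral gives its growth \<open>exp (\<beta> t) t\<^sup>\<alpha>\<^sup>-\<^sup>1 / \<beta>\<close>.
\<close>

lemma pochhammer_div_pochhammer_plus1:
  assumes "a > (0::real)"
  shows "pochhammer a n / pochhammer (1 + a) n = a / (a + real n)"
proof -
  have "pochhammer a (Suc n) = a * pochhammer (a + 1) n" by (rule pochhammer_rec)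
  moreover have "pochhammer a (Suc n) = pochhammer a n * (a + real n)" by (simp add: pochhammer_Suc)
  moreover have "pochhammer (1 + a) n > 0" using assms by (intro pochhammer_pos) auto
  moreover have "a + real n > 0" using assms by auto
  ultimately show ?thesis by (simp add: field_simps add.commute)
qed

lemma summable_hyp1F1_plus1:
  assumes "a > (0::real)"
  shows "summable (\<lambda>n. pochhammer a n / pochhammer (1 + a) n * z ^ n / fact n)"
proof (rule summable_comparison_test_ev)
  show "summable (\<lambda>n. \<bar>z\<bar> ^ n / fact n)"
    using summable_exp[of "\<bar>z\<bar>"] by (simp add: divide_inverse_commute)
  have "norm (pochhammer a n / pochhammer (1 + a) n * z ^ n / fact n) = a / (a + real n) * (\<bar>z\<bar> ^ n / fact n)" for n
    using assms by (simp add: pochhammer_div_pochhammer_plus1 abs_mult power_abs)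
  moreover have "a / (a + real n) * (\<bar>z\<bar> ^ n / fact n) \<le> \<bar>z\<bar> ^ n / fact n" for n
    using assms by (intro mult_left_le_one_le) auto
  ultimately show "\<forall>\<^sub>F n in sequentially. norm (pochhammer a n / pochhammer (1 + a) n * z ^ n / fact n) \<le> \<bar>z\<bar> ^ n / fact n"
    by (intro always_eventually allI) simp
qed

lemma sums_exp_mult_powr:
  fixes s :: real
  assumes "s \<ge> 0"
  shows "(\<lambda>n. b ^ n / fact n * s powr (real n + a - 1)) sums (exp (b * s) * s powr (a - 1))"
proof -
  have "b ^ n / fact n * s powr (real n + a - 1) = (b * s) ^ n / fact n * s powr (a - 1)" for n
  proof (cases "s = 0")
    case False
    then have "s powr (real n + a - 1) = s ^ n * s powr (a - 1)"
      using assms powr_add[of s "real n" "a - 1"] powr_realpow[of s n] by (simp add: add_diff_eq)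
    then show ?thesis
      by (simp add: power_mult_distrib)
  qed simp
  moreover have "(\<lambda>n. (b * s) ^ n / fact n * s powr (a - 1)) sums (exp (b * s) * s powr (a - 1))"
    using exp_converges[of "b * s"] by (intro sums_mult2) (simp add: divide_inverse_commute)
  ultimately show ?thesis
    by simp
qed

lemma nn_integral_exp_powr_eq_hyp1F1:
  assumes "a > 0" "b \<ge> 0" "t \<ge> 0"
  shows "(\<integral>\<^sup>+ s. ennreal (exp (b * s) * s powr (a - 1)) * indicator {0..t} s \<partial>lborel)
           = ennreal (t powr a / a * hyp1F1 a (1 + a) (b * t))"
proof -
  define c where "c n = b ^ n / fact n * (t powr (real n + a) / (real n + a))" for n
  have c_nonneg: "c n \<ge> 0" for n using assms by (auto simp: c_def)
  have power_term: "(\<integral>\<^sup>+ s. ennreal (b ^ n / fact n * s powr (real n + a - 1)) * indicator {0..t} s \<partial>lborel)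
      = ennreal (c n)" for n
  proof -
    have "((\<lambda>s. s powr (real n + a - 1)) has_integral (t powr (real n + a - 1 + 1) / (real n + a - 1 + 1))) {0..t}"
      using assms by (intro has_integral_powr_from_0) auto
    then have "((\<lambda>s. b ^ n / fact n * s powr (real n + a - 1)) has_integral (c n)) {0..t}"
      unfolding c_def by (intro has_integral_mult_right) simp
    then show ?thesis
      using assms by (intro nn_integral_has_integral_lebesgue') auto
  qed
  have c_eq: "c n = t powr a / a * (pochhammer a n / pochhammer (1 + a) n * (b * t) ^ n / fact n)" for n
  proof -
    have "t powr (real n + a) = t ^ n * t powr a"
      using assms by (cases "t = 0") (auto simp: powr_add powr_realpow)
    then show ?thesis
      unfolding c_def pochhammer_div_pochhammer_plus1[OF assms(1)] using assms
      by (simp add: field_simps power_mult_distrib)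
  qed
  have c_sums: "c sums (t powr a / a * hyp1F1 a (1 + a) (b * t))"
    unfolding c_eq hyp1F1_def by (intro sums_mult summable_sums summable_hyp1F1_plus1 assms(1))
  have series: "ennreal (exp (b * s) * s powr (a - 1)) * indicator {0..t} s =
      (\<Sum>n. ennreal (b ^ n / fact n * s powr (real n + a - 1)) * indicator {0..t} s)" for s
    using sums_exp_mult_powr[of s b a] assms
    by (cases "s \<in> {0..t}") (auto simp: ennreal_suminf_multc suminf_ennreal2 sums_iff)
  have "(\<integral>\<^sup>+ s. ennreal (exp (b * s) * s powr (a - 1)) * indicator {0..t} s \<partial>lborel) = (\<Sum>n. ennreal (c n))"
    unfolding series power_term[symmetric] by (intro nn_integral_suminf) auto
  also have "\<dots> = ennreal (t powr a / a * hyp1F1 a (1 + a) (b * t))"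
    using c_sums c_nonneg by (subst suminf_ennreal2) (auto simp: sums_iff)
  finally show ?thesis .
qed

lemma hyp1F1_plus1_nonneg:
  assumes "a > 0" "z \<ge> 0"
  shows "hyp1F1 a (1 + a) z \<ge> 0"
proof -
  have "pochhammer a n > 0" "pochhammer (1 + a) n > 0" for n
    using assms by (auto intro: pochhammer_pos)
  then show ?thesis
    unfolding hyp1F1_def using assms by (intro suminf_nonneg summable_hyp1F1_plus1) (auto simp: less_imp_le)
qed

lemma has_integral_exp_powr_hyp1F1:
  assumes "a > 0" "b \<ge> 0" "t \<ge> 0"
  shows "((\<lambda>s. exp (b * s) * s powr (a - 1)) has_integral (t powr a / a * hyp1F1 a (1 + a) (b * t))) {0..t}"
proof -
  have "(\<integral>\<^sup>+ s. ennreal (indicator {0..t} s * (exp (b * s) * s powr (a - 1))) \<partial>lborel)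
      = ennreal (t powr a / a * hyp1F1 a (1 + a) (b * t))"
    unfolding nn_integral_exp_powr_eq_hyp1F1[OF assms, symmetric]
    by (intro nn_integral_cong) (auto simp: indicator_def)
  then have "((\<lambda>s. indicator {0..t} s * (exp (b * s) * s powr (a - 1))) has_integral
      (t powr a / a * hyp1F1 a (1 + a) (b * t))) UNIV"
    using assms hyp1F1_plus1_nonneg[of a "b * t"] by (intro nn_integral_has_integral) auto
  moreover have "(\<lambda>s. indicator {0..t} s * (exp (b * s) * s powr (a - 1)))
      = (\<lambda>s. if s \<in> {0..t} then exp (b * s) * s powr (a - 1) else 0)"
    by (auto simp: indicator_def)
  ultimately show ?thesis
    by (simp only: has_integral_restrict_UNIV)
qed

lemma has_real_derivative_integral_exp_powr:
  assumes "a > 0" "b \<ge> 0" "t > 0"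
  shows "((\<lambda>u. integral {0..u} (\<lambda>s. exp (b * s) * s powr (a - 1))) has_real_derivative
           exp (b * t) * t powr (a - 1)) (at t)"
proof -
  let ?f = "\<lambda>s. exp (b * s) * s powr (a - 1)"
  have "?f integrable_on {0..t + 1}"
    using has_integral_exp_powr_hyp1F1[OF assms(1,2), of "t + 1"] assms by (auto intro: has_integral_integrable)
  moreover have "continuous (at t within {0..t + 1} - {0}) ?f"
    using assms by (intro continuous_intros) auto
  ultimately have "((\<lambda>u. integral {0..u} ?f) has_vector_derivative ?f t) (at t within {0..t + 1} - {0})"
    using assms by (intro integral_has_vector_derivative_continuous_at) auto
  moreover have "at t within {0..t + 1} - {0} = at t"
    using assms by (intro at_within_open_subset[where S = "{0<..<t + 1}"]) auto
  ultimately show ?thesis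
    by (simp add: has_real_derivative_iff_has_vector_derivative)
qed

text \<open>Equivalently, Kummer's asymptotics \<open>\<^sub>1F\<^sub>1(a, 1 + a, z) \<sim> a e\<^sup>z / z\<close>.\<close>
lemma hyp1F1_plus1_asymp_equiv:
  assumes "a > 0" "b > 0"
  shows "(\<lambda>t. t powr a / a * hyp1F1 a (1 + a) (b * t)) \<sim>[at_top] (\<lambda>t. exp (b * t) * t powr (a - 1) / b)"
proof -
  define f where "f s = exp (b * s) * s powr (a - 1)" for s
  define I where "I u = integral {0..u} f" for u
  have I_eq: "I u = u powr a / a * hyp1F1 a (1 + a) (b * u)" if "u \<ge> 0" for u
    unfolding I_def f_def using has_integral_exp_powr_hyp1F1[OF assms(1) _ that] assms
    by (simp add: integral_unique)
  have I_deriv: "(I has_real_derivative f t) (at t)" if "t > 0" for t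
    unfolding I_def f_def using assms that by (intro has_real_derivative_integral_exp_powr) auto
  have "((\<lambda>t. I t / (exp (b * t) * t powr (a - 1) / b)) \<longlongrightarrow> 1) at_top"
  proof (rule lhospital_at_top_at_top[where f' = f and
        g' = "\<lambda>t. exp (b * t) * t powr (a - 1) * (1 + (a - 1) / (b * t))"])
    show "filterlim (\<lambda>t. exp (b * t) * t powr (a - 1) / b) at_top at_top"
      using assms by real_asymp
    have "eventually (\<lambda>t. 1 + (a - 1) / (b * t) > 0) at_top"
      using assms by real_asymp
    then show "eventually (\<lambda>t. exp (b * t) * t powr (a - 1) * (1 + (a - 1) / (b * t)) \<noteq> 0) at_top"
      using eventually_gt_at_top[of 0] by eventually_elim auto
    show "eventually (\<lambda>t. DERIV I t :> f t) at_top"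
      using eventually_gt_at_top[of 0] by eventually_elim (rule I_deriv)
    show "eventually (\<lambda>t. DERIV (\<lambda>t. exp (b * t) * t powr (a - 1) / b) t :>
        exp (b * t) * t powr (a - 1) * (1 + (a - 1) / (b * t))) at_top"
      using eventually_gt_at_top[of 0]
    proof eventually_elim
      case (elim t)
      then have powr_pred: "t powr (a - 2) = t powr (a - 1) / t"
        using powr_diff[of t "a - 1" 1] by simp
      show ?case using elim assms
        by (auto intro!: derivative_eq_intros simp: powr_pred field_simps)
    qed
    show "((\<lambda>t. f t / (exp (b * t) * t powr (a - 1) * (1 + (a - 1) / (b * t)))) \<longlongrightarrow> 1) at_top"
      unfolding f_def using assms by real_asymp
  qed
  moreover have "eventually (\<lambda>t. I t / (exp (b * t) * t powr (a - 1) / b)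
      = t powr a / a * hyp1F1 a (1 + a) (b * t) / (exp (b * t) * t powr (a - 1) / b)) at_top"
    using eventually_ge_at_top[of 0] by eventually_elim (simp add: I_eq)
  ultimately show ?thesis
    by (intro asymp_equivI') (rule Lim_transform_eventually)
qed

lemma measure_eqI_atMost:
  fixes M N :: "real measure"
  assumes sets: "sets M = sets borel" "sets N = sets borel"
    and finite: "\<And>x. emeasure M {..x} < \<infinity>"
    and eq: "\<And>x. emeasure M {..x} = emeasure N {..x}"
  shows "M = N"
proof (rule measure_eqI_generator_eq_countable)
  let ?atMost = "\<lambda>a::real. {..a}"
  show "Int_stable (range ?atMost)"
    by (auto simp: Int_stable_def)
  show "range ?atMost \<subseteq> Pow UNIV" "sets M = sigma_sets UNIV (range ?atMost)"
    "sets N = sigma_sets UNIV (range ?atMost)"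
    unfolding sets borel_eq_atMost by auto
  show "?atMost ` \<rat> \<subseteq> range ?atMost"
    by auto
  show "(\<Union>a\<in>\<rat>. ?atMost a) = UNIV"
    using Rats_no_top_le by auto
  show "\<And>A. A \<in> ?atMost ` \<rat> \<Longrightarrow> emeasure M A \<noteq> \<infinity>"
    using finite by (auto simp: less_top)
qed (use eq countable_rat in auto)

text \<open>The mean measure \<open>A \<mapsto> E #{i. T i \<in> A}\<close> of the point process with points \<open>T i\<close>.\<close>
definition intensity_measure :: "'a measure \<Rightarrow> (nat \<Rightarrow> 'a \<Rightarrow> real) \<Rightarrow> real measure" where
  "intensity_measure M T = distr (count_space UNIV \<Otimes>\<^sub>M M) borel (\<lambda>(i, \<omega>). T i \<omega>)"

lemma (in sigma_finite_measure) nn_integral_intensity_measure: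
  assumes T: "\<And>i. T i \<in> borel_measurable M" and [measurable]: "\<phi> \<in> borel_measurable borel"
  shows "(\<integral>\<^sup>+ s. \<phi> s \<partial>intensity_measure M T) = (\<Sum>i. \<integral>\<^sup>+ \<omega>. \<phi> (T i \<omega>) \<partial>M)"
proof -
  have [measurable]: "(\<lambda>(i, \<omega>). T i \<omega>) \<in> borel_measurable (count_space UNIV \<Otimes>\<^sub>M M)"
    using T by (intro measurable_pair_measure_countable1) auto
  have "(\<integral>\<^sup>+ s. \<phi> s \<partial>intensity_measure M T)
      = (\<integral>\<^sup>+ x. \<phi> (case x of (i, \<omega>) \<Rightarrow> T i \<omega>) \<partial>(count_space UNIV \<Otimes>\<^sub>M M))"
    unfolding intensity_measure_def by (subst nn_integral_distr) auto
  also have "\<dots> = (\<integral>\<^sup>+ i. \<integral>\<^sup>+ \<omega>. \<phi> (T i \<omega>) \<partial>M \<partial>count_space UNIV)"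
    using nn_integral_fst[of "\<lambda>x. \<phi> (case x of (i, \<omega>) \<Rightarrow> T i \<omega>)"] by simp
  finally show ?thesis
    by (simp add: nn_integral_count_space_nat)
qed

lemma (in sigma_finite_measure) emeasure_intensity_measure_atMost:
  assumes "\<And>i. T i \<in> borel_measurable M"
  shows "emeasure (intensity_measure M T) {..t} = (\<integral>\<^sup>+ \<omega>. (\<Sum>i. indicator {\<omega> \<in> space M. T i \<omega> \<le> t} \<omega>) \<partial>M)"
proof -
  have "emeasure (intensity_measure M T) {..t} = (\<integral>\<^sup>+ s. indicator {..t} s \<partial>intensity_measure M T)"
    by (simp add: intensity_measure_def)
  also have "\<dots> = (\<integral>\<^sup>+ \<omega>. (\<Sum>i. indicator {..t} (T i \<omega>)) \<partial>M)"
    using assms by (subst nn_integral_intensity_measure) (auto intro: nn_integral_suminf[symmetric])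
  also have "\<dots> = (\<integral>\<^sup>+ \<omega>. (\<Sum>i. indicator {\<omega> \<in> space M. T i \<omega> \<le> t} \<omega>) \<partial>M)"
    by (intro nn_integral_cong) (auto simp: indicator_def)
  finally show ?thesis .
qed

text \<open>The density \<open>m'(s) = \<lambda> s\<^sup>\<alpha>\<^sup>-\<^sup>1 / \<Gamma>(\<alpha>)\<close> of the renewal function.\<close>
definition fpp_intensity :: "real \<Rightarrow> real \<Rightarrow> real \<Rightarrow> ennreal" where
  "fpp_intensity lam \<alpha> s = ennreal (lam / Gamma \<alpha> * s powr (\<alpha> - 1)) * indicator {0..} s"

lemma fpp_intensity_measurable [measurable]: "fpp_intensity lam \<alpha> \<in> borel_measurable borel"
  unfolding fpp_intensity_def by measurable

lemma Gamma_1_plus: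
  fixes \<alpha> :: real
  assumes "\<alpha> > 0"
  shows "Gamma (1 + \<alpha>) = \<alpha> * Gamma \<alpha>"
proof -
  have "\<alpha> \<notin> \<int>\<^sub>\<le>\<^sub>0" using assms nonpos_Ints_nonpos by force
  then show ?thesis using Gamma_plus1[of \<alpha>] by (simp add: add.commute)
qed

lemma emeasure_fpp_intensity_atMost:
  assumes "lam \<ge> 0" "\<alpha> > 0"
  shows "emeasure (density lborel (fpp_intensity lam \<alpha>)) {..t}
           = (if t \<ge> 0 then ennreal (fpp_renewal_fun lam \<alpha> t) else 0)"
proof -
  have "emeasure (density lborel (fpp_intensity lam \<alpha>)) {..t}
      = (\<integral>\<^sup>+ s. ennreal (lam / Gamma \<alpha> * s powr (\<alpha> - 1)) * indicator {0..t} s \<partial>lborel)"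
    by (subst emeasure_density) (auto simp: fpp_intensity_def indicator_def intro!: nn_integral_cong)
  also have "\<dots> = (if t \<ge> 0 then ennreal (fpp_renewal_fun lam \<alpha> t) else 0)"
  proof (cases "t \<ge> 0")
    case True
    have "((\<lambda>s. s powr (\<alpha> - 1)) has_integral (t powr (\<alpha> - 1 + 1) / (\<alpha> - 1 + 1))) {0..t}"
      using True assms by (intro has_integral_powr_from_0) auto
    then have "((\<lambda>s. lam / Gamma \<alpha> * s powr (\<alpha> - 1)) has_integral (fpp_renewal_fun lam \<alpha> t)) {0..t}"
      unfolding fpp_renewal_fun_def Gamma_1_plus[OF assms(2)] using assms
      by (intro has_integral_mult_right[THEN has_integral_eq_rhs]) (auto simp: field_simps)
    then show ?thesis
      using True assms by (subst nn_integral_has_integral_lebesgue') auto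
  qed simp
  finally show ?thesis .
qed

lemma fractional_poisson_renewalD:
  assumes "fractional_poisson_renewal M lam \<alpha> J"
  shows fractional_poisson_renewal_measurable: "J i \<in> borel_measurable M"
    and fractional_poisson_renewal_function:
      "t \<ge> 0 \<Longrightarrow> (\<integral>\<^sup>+ \<omega>. (\<Sum>i. indicator {\<omega> \<in> space M. arrival_time J i \<omega> \<le> t} \<omega>) \<partial>M)
                  = ennreal (fpp_renewal_fun lam \<alpha> t)"
  using assms unfolding fractional_poisson_renewal_def by blast+

lemma (in prob_space) intensity_measure_fractional_poisson:
  assumes fpp: "fractional_poisson_renewal M lam \<alpha> J" and "lam \<ge> 0" "\<alpha> > 0"
  shows "intensity_measure M (arrival_time J) = density lborel (fpp_intensity lam \<alpha>)"
proof -
  have [measurable]: "J i \<in> borel_measurable M" for i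
    using fpp by (rule fractional_poisson_renewal_measurable)
  have T: "arrival_time J i \<in> borel_measurable M" for i
    unfolding arrival_time_def by measurable
  have atMost: "emeasure (intensity_measure M (arrival_time J)) {..t} = ennreal (fpp_renewal_fun lam \<alpha> t)"
    if "t \<ge> 0" for t
    using T fractional_poisson_renewal_function[OF fpp that] by (simp add: emeasure_intensity_measure_atMost)
  show ?thesis
  proof (rule measure_eqI_atMost)
    show "sets (intensity_measure M (arrival_time J)) = sets borel"
      by (simp add: intensity_measure_def)
    have "emeasure (intensity_measure M (arrival_time J)) {..t} = (if t \<ge> 0 then ennreal (fpp_renewal_fun lam \<alpha> t) else 0)" for t
    proof (cases "t \<ge> 0")
      case False
      have "emeasure (intensity_measure M (arrival_time J)) {..t} \<le> emeasure (intensity_measure M (arrival_time J)) {..0}"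
        using False by (intro emeasure_mono) (auto simp: intensity_measure_def)
      also have "\<dots> = 0"
        using atMost[of 0] assms by (simp add: fpp_renewal_fun_def)
      finally show ?thesis using False by simp
    qed (simp add: atMost)
    then show "emeasure (intensity_measure M (arrival_time J)) {..t} < \<infinity>"
      and "emeasure (intensity_measure M (arrival_time J)) {..t} = emeasure (density lborel (fpp_intensity lam \<alpha>)) {..t}" for t
      using assms by (simp_all add: emeasure_fpp_intensity_atMost)
  qed simp
qed

lemma (in prob_space) fractional_poisson_campbell:
  assumes fpp: "fractional_poisson_renewal M lam \<alpha> J" and "lam \<ge> 0" "\<alpha> > 0"
    and [measurable]: "\<phi> \<in> borel_measurable borel"
  shows "(\<Sum>i. \<integral>\<^sup>+ \<omega>. \<phi> (arrival_time J i \<omega>) \<partial>M) = (\<integral>\<^sup>+ s. fpp_intensity lam \<alpha> s * \<phi> s \<partial>lborel)"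
proof -
  have [measurable]: "J i \<in> borel_measurable M" for i
    using fpp by (rule fractional_poisson_renewal_measurable)
  have "arrival_time J i \<in> borel_measurable M" for i
    unfolding arrival_time_def by measurable
  then show ?thesis
    using nn_integral_intensity_measure[of "arrival_time J" \<phi>]
    by (simp add: intensity_measure_fractional_poisson[OF assms(1-3)] nn_integral_density)
qed

lemma nn_integral_exponential_density_discounted_tail:
  assumes "\<beta> > 0" "\<delta> \<ge> 0" "c \<ge> 0"
  shows "(\<integral>\<^sup>+ l. ennreal (exponential_density \<beta> l * exp (- \<delta> * l)) * indicator {c<..} l \<partial>lborel)
           = ennreal (\<beta> / (\<beta> + \<delta>) * exp (- (\<beta> + \<delta>) * c))"
proof -
  have "(\<integral>\<^sup>+ l. ennreal (exponential_density \<beta> l * exp (- \<delta> * l)) * indicator {c<..} l \<partial>lborel)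
      = (\<integral>\<^sup>+ l. ennreal (\<beta> * exp (- (\<beta> + \<delta>) * l)) * indicator {c..} l \<partial>lborel)"
  proof (rule nn_integral_cong_AE)
    show "AE l in lborel. ennreal (exponential_density \<beta> l * exp (- \<delta> * l)) * indicator {c<..} l
        = ennreal (\<beta> * exp (- (\<beta> + \<delta>) * l)) * indicator {c..} l"
      using AE_lborel_singleton[of c]
    proof eventually_elim
      case (elim l)
      have "exp (- l * \<beta>) * exp (- \<delta> * l) = exp (- (\<beta> + \<delta>) * l)"
        by (simp add: mult_exp_exp algebra_simps)
      then show ?case
        using elim assms by (auto simp: exponential_density_def indicator_def mult.assoc)
    qed
  qed
  also have "\<dots> = ennreal (\<beta> * (exp (- (\<beta> + \<delta>) * c) / (\<beta> + \<delta>)))"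
    using assms
    by (intro nn_integral_has_integral_lebesgue' has_integral_mult_right has_integral_exp_minus_to_infinity) auto
  finally show ?thesis
    by simp
qed

lemma (in prob_space) exponential_discounted_tail:
  assumes Y: "distributed M lborel Y (exponential_density \<beta>)" and "\<beta> > 0" "\<delta> \<ge> 0" "c \<ge> 0"
  shows "(\<integral>\<^sup>+ \<omega>. ennreal (exp (- \<delta> * Y \<omega>)) * indicator {c<..} (Y \<omega>) \<partial>M)
           = ennreal (\<beta> / (\<beta> + \<delta>) * exp (- (\<beta> + \<delta>) * c))"
proof -
  have "(\<integral>\<^sup>+ \<omega>. ennreal (exp (- \<delta> * Y \<omega>)) * indicator {c<..} (Y \<omega>) \<partial>M)
      = (\<integral>\<^sup>+ l. exponential_density \<beta> l * (ennreal (exp (- \<delta> * l)) * indicator {c<..} l) \<partial>lborel)"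
    by (rule distributed_nn_integral[OF Y, symmetric]) simp
  also have "\<dots> = (\<integral>\<^sup>+ l. ennreal (exponential_density \<beta> l * exp (- \<delta> * l)) * indicator {c<..} l \<partial>lborel)"
    using assms by (simp add: ennreal_mult exponential_density_nonneg mult.assoc)
  finally show ?thesis
    using nn_integral_exponential_density_discounted_tail[OF assms(2-4)] by simp
qed

lemma (in prob_space) exponential_laplace_transform:
  assumes Y: "distributed M lborel Y (exponential_density \<beta>)" and "\<beta> > 0" "\<delta> \<ge> 0"
  shows "(\<integral>\<omega>. exp (- \<delta> * Y \<omega>) \<partial>M) = \<beta> / (\<beta> + \<delta>)"
proof -
  have [measurable]: "Y \<in> borel_measurable M"
    using distributed_measurable[OF Y] by simp
  have "(\<integral>\<^sup>+ \<omega>. ennreal (exp (- \<delta> * Y \<omega>)) \<partial>M)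
      = (\<integral>\<^sup>+ l. exponential_density \<beta> l * ennreal (exp (- \<delta> * l)) \<partial>lborel)"
    by (rule distributed_nn_integral[OF Y, symmetric]) simp
  also have "\<dots> = (\<integral>\<^sup>+ l. ennreal (exponential_density \<beta> l * exp (- \<delta> * l)) * indicator {0<..} l \<partial>lborel)"
    using AE_lborel_singleton[of 0] assms
    by (intro nn_integral_cong_AE) (auto elim!: eventually_mono simp: exponential_density_def ennreal_mult)
  also have "\<dots> = ennreal (\<beta> / (\<beta> + \<delta>))"
    using nn_integral_exponential_density_discounted_tail[of \<beta> \<delta> 0] assms by simp
  finally show ?thesis
    using assms by (subst (asm) nn_integral_eq_integrable) auto
qed

definition ibnr_weight :: "real \<Rightarrow> real \<Rightarrow> real \<Rightarrow> real \<Rightarrow> real" where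
  "ibnr_weight t \<delta> s l = (if s \<le> t \<and> t < s + l then exp (- \<delta> * (s + l)) else 0)"

lemma ibnr_weight_measurable [measurable]:
  "(\<lambda>(s, l). ibnr_weight t \<delta> s l) \<in> borel_measurable (borel \<Otimes>\<^sub>M borel)"
  "ibnr_weight t \<delta> s \<in> borel_measurable borel"
  unfolding ibnr_weight_def by measurable

lemma ibnr_weight_bounds:
  assumes "t \<ge> 0" "\<delta> \<ge> 0"
  shows "0 \<le> ibnr_weight t \<delta> s l" "ibnr_weight t \<delta> s l \<le> 1"
  using assms by (auto simp: ibnr_weight_def mult_nonneg_nonneg)

lemma Zdelta_eq_suminf_ibnr_weight:
  "Zdelta J X L \<delta> t \<omega> = (\<Sum>i. X i \<omega> * ibnr_weight t \<delta> (arrival_time J i \<omega>) (L i \<omega>))"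
  unfolding Zdelta_def ibnr_weight_def by (intro arg_cong[where f = suminf] ext) simp

lemma (in prob_space) exponential_nn_integral_ibnr_weight:
  assumes Y: "distributed M lborel Y (exponential_density \<beta>)" and "\<beta> > 0" "\<delta> \<ge> 0"
  shows "(\<integral>\<^sup>+ \<omega>. ennreal (ibnr_weight t \<delta> s (Y \<omega>)) \<partial>M)
           = ennreal (\<beta> / (\<beta> + \<delta>) * exp (- (\<beta> + \<delta>) * t) * exp (\<beta> * s)) * indicator {..t} s"
proof (cases "s \<le> t")
  case True
  have [measurable]: "Y \<in> borel_measurable M"
    using distributed_measurable[OF Y] by simp
  have "ennreal (ibnr_weight t \<delta> s l) = ennreal (exp (- \<delta> * s)) * (ennreal (exp (- \<delta> * l)) * indicator {t - s<..} l)" for l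
    using True by (auto simp: ibnr_weight_def indicator_def ennreal_mult[symmetric] mult_exp_exp algebra_simps)
  then have "(\<integral>\<^sup>+ \<omega>. ennreal (ibnr_weight t \<delta> s (Y \<omega>)) \<partial>M)
      = ennreal (exp (- \<delta> * s)) * (\<integral>\<^sup>+ \<omega>. ennreal (exp (- \<delta> * Y \<omega>)) * indicator {t - s<..} (Y \<omega>) \<partial>M)"
    by (simp only:) (rule nn_integral_cmult, measurable)
  also have "\<dots> = ennreal (exp (- \<delta> * s)) * ennreal (\<beta> / (\<beta> + \<delta>) * exp (- (\<beta> + \<delta>) * (t - s)))"
    using True by (simp only: exponential_discounted_tail[OF Y assms(2,3)] diff_ge_0_iff_ge)
  also have "exp (- \<delta> * s) * exp (- (\<beta> + \<delta>) * (t - s)) = exp (- (\<beta> + \<delta>) * t) * exp (\<beta> * s)"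
    by (simp add: mult_exp_exp algebra_simps)
  then have "ennreal (exp (- \<delta> * s)) * ennreal (\<beta> / (\<beta> + \<delta>) * exp (- (\<beta> + \<delta>) * (t - s)))
      = ennreal (\<beta> / (\<beta> + \<delta>) * exp (- (\<beta> + \<delta>) * t) * exp (\<beta> * s))"
    using assms by (simp add: ennreal_mult[symmetric] mult_ac)
  finally show ?thesis
    using True by simp
qed (simp add: ibnr_weight_def)

lemma (in prob_space) nn_integral_indep_var:
  assumes indep: "indep_var borel X borel Y" and [measurable]: "f \<in> borel_measurable (borel \<Otimes>\<^sub>M borel)"
  shows "(\<integral>\<^sup>+ \<omega>. f (X \<omega>, Y \<omega>) \<partial>M) = (\<integral>\<^sup>+ \<omega>. \<integral>\<^sup>+ \<omega>'. f (X \<omega>, Y \<omega>') \<partial>M \<partial>M)"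
proof -
  have [measurable]: "X \<in> borel_measurable M" "Y \<in> borel_measurable M"
    using indep by (auto simp: indep_var_distribution_eq)
  interpret Y: prob_space "distr M borel Y"
    by (rule prob_space_distr) simp
  have "(\<integral>\<^sup>+ \<omega>. f (X \<omega>, Y \<omega>) \<partial>M) = (\<integral>\<^sup>+ p. f p \<partial>distr M (borel \<Otimes>\<^sub>M borel) (\<lambda>\<omega>. (X \<omega>, Y \<omega>)))"
    by (subst nn_integral_distr) auto
  also have "\<dots> = (\<integral>\<^sup>+ p. f p \<partial>(distr M borel X \<Otimes>\<^sub>M distr M borel Y))"
    using indep by (simp add: indep_var_distribution_eq)
  also have "\<dots> = (\<integral>\<^sup>+ x. \<integral>\<^sup>+ y. f (x, y) \<partial>distr M borel Y \<partial>distr M borel X)"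
    by (simp add: Y.nn_integral_fst)
  also have "\<dots> = (\<integral>\<^sup>+ \<omega>. \<integral>\<^sup>+ \<omega>'. f (X \<omega>, Y \<omega>') \<partial>M \<partial>M)"
    by (simp add: nn_integral_distr)
  finally show ?thesis .
qed

lemma (in prob_space) indep_var_restrict_compose:
  assumes "indep_vars (\<lambda>_. borel) Y I" "A \<inter> B = {}" "A \<subseteq> I" "B \<subseteq> I"
    and "f \<in> borel_measurable (Pi\<^sub>M A (\<lambda>_. borel))" "g \<in> borel_measurable (Pi\<^sub>M B (\<lambda>_. borel))"
  shows "indep_var borel (\<lambda>\<omega>. f (restrict (\<lambda>i. Y i \<omega>) A)) borel (\<lambda>\<omega>. g (restrict (\<lambda>i. Y i \<omega>) B))"
  using indep_var_compose[OF indep_var_restrict[OF assms(1-4)] assms(5,6)] by (simp add: comp_def)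

lemma integrable_of_distr_eq:
  fixes X Y :: "'a \<Rightarrow> real"
  assumes "integrable M X" "distr M borel Y = distr M borel X"
    and "X \<in> borel_measurable M" "Y \<in> borel_measurable M"
  shows "integrable M Y"
  using assms by (metis integrable_distr_eq[of X M borel "\<lambda>x. x"] integrable_distr_eq[of Y M borel "\<lambda>x. x"]
      measurable_ident_sets)

lemma integral_comp_of_distr_eq:
  fixes X Y :: "'a \<Rightarrow> real" and f :: "real \<Rightarrow> real"
  assumes "distr M borel Y = distr M borel X"
    and "X \<in> borel_measurable M" "Y \<in> borel_measurable M" "f \<in> borel_measurable borel"
  shows "(\<integral>\<omega>. f (Y \<omega>) \<partial>M) = (\<integral>\<omega>. f (X \<omega>) \<partial>M)"
  using assms by (metis integral_distr)

lemma integral_suminf_of_summable_norm: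
  fixes f :: "nat \<Rightarrow> 'a \<Rightarrow> 'b::{banach, second_countable_topology}"
  assumes int: "\<And>i. integrable M (f i)" and summable: "summable (\<lambda>i. \<integral>x. norm (f i x) \<partial>M)"
  shows "(\<integral>x. (\<Sum>i. f i x) \<partial>M) = (\<Sum>i. \<integral>x. f i x \<partial>M)"
proof (rule integral_suminf[OF int _ summable])
  have "(\<integral>\<^sup>+ x. (\<Sum>i. ennreal (norm (f i x))) \<partial>M) = (\<Sum>i. \<integral>\<^sup>+ x. ennreal (norm (f i x)) \<partial>M)"
    using int by (intro nn_integral_suminf) auto
  also have "\<dots> = (\<Sum>i. ennreal (\<integral>x. norm (f i x) \<partial>M))"
    using int by (subst nn_integral_eq_integral) auto
  also have "\<dots> = ennreal (\<Sum>i. \<integral>x. norm (f i x) \<partial>M)"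
    using summable by (intro suminf_ennreal2) auto
  finally have "AE x in M. (\<Sum>i. ennreal (norm (f i x))) \<noteq> \<infinity>"
    using int by (intro nn_integral_PInf_AE) auto
  then show "AE x in M. summable (\<lambda>i. norm (f i x))"
    by eventually_elim (intro summable_suminf_not_top, auto)
qed

locale ibnr_model = prob_space M for M :: "'a measure" +
  fixes lam \<alpha> \<beta> :: real and J X L :: "nat \<Rightarrow> 'a \<Rightarrow> real"
  assumes lam_pos: "lam > 0" and alpha_pos: "\<alpha> > 0" and beta_pos: "\<beta> > 0"
    and arrivals: "fractional_poisson_renewal M lam \<alpha> J"
    and claims_measurable: "\<forall>i. X i \<in> borel_measurable M"
    and claims_distr: "\<forall>i. distr M borel (X i) = distr M borel (X 0)"
    and claim_integrable: "integrable M (X 0)"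
    and delays_measurable: "\<forall>i. L i \<in> borel_measurable M"
    and delays_distr: "\<forall>i. distr M borel (L i) = distr M borel (L 0)"
    and delay_tail: "\<forall>x\<ge>0. measure M {\<omega> \<in> space M. L 0 \<omega> > x} = exp (- \<beta> * x)"
    and independent: "indep_vars (\<lambda>_. borel) (case_sum J (case_sum X L)) UNIV"
begin

lemma model_measurable [measurable]:
  "J i \<in> borel_measurable M" "X i \<in> borel_measurable M" "L i \<in> borel_measurable M"
  using fractional_poisson_renewal_measurable[OF arrivals] claims_measurable delays_measurable
  by blast+

lemma arrival_time_measurable [measurable]: "arrival_time J i \<in> borel_measurable M"
  unfolding arrival_time_def by measurable

lemma delay_exponential: "distributed M lborel (L i) (exponential_density \<beta>)"
proof -
  have "distributed M lborel (L 0) (exponential_density \<beta>)"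
  proof (subst exponential_distributed_iff[OF beta_pos], safe)
    fix a :: real assume "0 \<le> a"
    have "{\<omega> \<in> space M. L 0 \<omega> \<le> a} = space M - {\<omega> \<in> space M. L 0 \<omega> > a}"
      by auto
    then show "\<P>(\<omega> in M. L 0 \<omega> \<le> a) = 1 - exp (- a * \<beta>)"
      using delay_tail \<open>0 \<le> a\<close> by (simp add: prob_compl mult.commute)
  qed simp
  moreover have "distr M lborel Y = distr M borel Y" for Y :: "'a \<Rightarrow> real"
    by (rule distr_cong) simp_all
  moreover have "distr M borel (L i) = distr M borel (L 0)"
    using delays_distr by blast
  ultimately show ?thesis
    by (simp add: distributed_def)
qed

lemma delay_laplace_transform: "\<delta> \<ge> 0 \<Longrightarrow> (\<integral>\<omega>. exp (- \<delta> * L 0 \<omega>) \<partial>M) = \<beta> / (\<beta> + \<delta>)"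
  using exponential_laplace_transform[OF delay_exponential beta_pos] .

lemma delay_expectation: "(\<integral>\<omega>. L 0 \<omega> \<partial>M) = 1 / \<beta>"
  using exponential_distributed_expectation[OF beta_pos delay_exponential] .

lemma claim_distr: "distr M borel (X i) = distr M borel (X 0)"
  using claims_distr by blast

lemma claims_integrable: "integrable M (X i)"
  using claim_integrable claim_distr by (rule integrable_of_distr_eq) simp_all

lemma integral_claim_comp:
  fixes f :: "real \<Rightarrow> real"
  assumes "f \<in> borel_measurable borel"
  shows "(\<integral>\<omega>. f (X i \<omega>) \<partial>M) = (\<integral>\<omega>. f (X 0 \<omega>) \<partial>M)"
  using claim_distr by (rule integral_comp_of_distr_eq) (simp_all add: assms)

lemma indep_arrival_time_delay: "indep_var borel (arrival_time J i) borel (L i)"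
proof -
  have "indep_var borel (\<lambda>\<omega>. (\<lambda>y. \<Sum>k\<le>i. y (Inl k)) (restrict (\<lambda>j. case_sum J (case_sum X L) j \<omega>) (Inl ` {..i})))
      borel (\<lambda>\<omega>. (\<lambda>y. y (Inr (Inr i))) (restrict (\<lambda>j. case_sum J (case_sum X L) j \<omega>) {Inr (Inr i)}))"
    by (rule indep_var_restrict_compose[OF independent])
       (auto intro!: borel_measurable_sum measurable_component_singleton)
  moreover have "(\<lambda>\<omega>. \<Sum>k\<le>i. restrict (\<lambda>j. case_sum J (case_sum X L) j \<omega>) (Inl ` {..i}) (Inl k)) = arrival_time J i"
    by (auto simp: arrival_time_def fun_eq_iff intro!: sum.cong)
  ultimately show ?thesis
    by (simp add: fun_eq_iff)
qed

lemma indep_claim_ibnr_weight: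
  "indep_var borel (X i) borel (\<lambda>\<omega>. ibnr_weight t \<delta> (arrival_time J i \<omega>) (L i \<omega>))"
proof -
  let ?B = "Inl ` {..i} \<union> {Inr (Inr i)}"
  have [measurable]: "(\<lambda>y. \<Sum>k\<le>i. y (Inl k) :: real) \<in> borel_measurable (Pi\<^sub>M ?B (\<lambda>_. borel))"
    "(\<lambda>y. y (Inr (Inr i)) :: real) \<in> borel_measurable (Pi\<^sub>M ?B (\<lambda>_. borel))"
    by (auto intro!: borel_measurable_sum measurable_component_singleton)
  have "indep_var borel (\<lambda>\<omega>. (\<lambda>y. y (Inr (Inl i))) (restrict (\<lambda>j. case_sum J (case_sum X L) j \<omega>) {Inr (Inl i)}))
      borel (\<lambda>\<omega>. (\<lambda>y. ibnr_weight t \<delta> (\<Sum>k\<le>i. y (Inl k)) (y (Inr (Inr i))))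
                  (restrict (\<lambda>j. case_sum J (case_sum X L) j \<omega>) ?B))"
    by (rule indep_var_restrict_compose[OF independent])
       (auto intro!: measurable_component_singleton)
  moreover have "(\<lambda>\<omega>. \<Sum>k\<le>i. restrict (\<lambda>j. case_sum J (case_sum X L) j \<omega>) ?B (Inl k)) = arrival_time J i"
    by (auto simp: arrival_time_def fun_eq_iff intro!: sum.cong)
  ultimately show ?thesis
    by (simp add: fun_eq_iff)
qed

lemma nn_integral_ibnr_weight:
  assumes "\<delta> \<ge> 0"
  shows "(\<integral>\<^sup>+ \<omega>. ennreal (ibnr_weight t \<delta> (arrival_time J i \<omega>) (L i \<omega>)) \<partial>M)
           = (\<integral>\<^sup>+ \<omega>. ennreal (\<beta> / (\<beta> + \<delta>) * exp (- (\<beta> + \<delta>) * t) * exp (\<beta> * arrival_time J i \<omega>))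
                        * indicator {..t} (arrival_time J i \<omega>) \<partial>M)"
  using nn_integral_indep_var[OF indep_arrival_time_delay, of "\<lambda>(s, l). ennreal (ibnr_weight t \<delta> s l)"]
    exponential_nn_integral_ibnr_weight[OF delay_exponential beta_pos assms]
  by simp

lemma sum_nn_integral_ibnr_weight:
  assumes "t \<ge> 0" "\<delta> \<ge> 0"
  shows "(\<Sum>i. \<integral>\<^sup>+ \<omega>. ennreal (ibnr_weight t \<delta> (arrival_time J i \<omega>) (L i \<omega>)) \<partial>M)
           = ennreal (lam * (\<beta> / (\<beta> + \<delta>)) * exp (- (\<beta> + \<delta>) * t) * t powr \<alpha> / Gamma (1 + \<alpha>)
                      * hyp1F1 \<alpha> (1 + \<alpha>) (\<beta> * t))"
proof -
  define K where "K = \<beta> / (\<beta> + \<delta>) * exp (- (\<beta> + \<delta>) * t)"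
  have K: "K \<ge> 0"
    using beta_pos assms by (simp add: K_def)
  have Gamma: "Gamma \<alpha> > 0"
    using alpha_pos by (rule Gamma_real_pos)
  have "(\<Sum>i. \<integral>\<^sup>+ \<omega>. ennreal (ibnr_weight t \<delta> (arrival_time J i \<omega>) (L i \<omega>)) \<partial>M)
      = (\<Sum>i. \<integral>\<^sup>+ \<omega>. (\<lambda>s. ennreal (K * exp (\<beta> * s)) * indicator {..t} s) (arrival_time J i \<omega>) \<partial>M)"
    using nn_integral_ibnr_weight[OF assms(2)] by (simp add: K_def)
  also have "\<dots> = (\<integral>\<^sup>+ s. fpp_intensity lam \<alpha> s * (ennreal (K * exp (\<beta> * s)) * indicator {..t} s) \<partial>lborel)"
    using lam_pos alpha_pos by (intro fractional_poisson_campbell[OF arrivals]) auto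
  also have "\<dots> = (\<integral>\<^sup>+ s. ennreal (lam / Gamma \<alpha> * K)
                       * (ennreal (exp (\<beta> * s) * s powr (\<alpha> - 1)) * indicator {0..t} s) \<partial>lborel)"
    using lam_pos Gamma K
    by (intro nn_integral_cong) (auto simp: fpp_intensity_def indicator_def ennreal_mult[symmetric] mult_ac)
  also have "\<dots> = ennreal (lam / Gamma \<alpha> * K) * ennreal (t powr \<alpha> / \<alpha> * hyp1F1 \<alpha> (1 + \<alpha>) (\<beta> * t))"
    using alpha_pos beta_pos assms by (simp add: nn_integral_cmult nn_integral_exp_powr_eq_hyp1F1)
  also have "\<dots> = ennreal (lam / Gamma \<alpha> * K * (t powr \<alpha> / \<alpha> * hyp1F1 \<alpha> (1 + \<alpha>) (\<beta> * t)))"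
    using lam_pos Gamma K alpha_pos beta_pos assms hyp1F1_plus1_nonneg[of \<alpha> "\<beta> * t"]
    by (intro ennreal_mult[symmetric]) auto
  also have "lam / Gamma \<alpha> * K * (t powr \<alpha> / \<alpha> * hyp1F1 \<alpha> (1 + \<alpha>) (\<beta> * t))
      = lam * (\<beta> / (\<beta> + \<delta>)) * exp (- (\<beta> + \<delta>) * t) * t powr \<alpha> / Gamma (1 + \<alpha>) * hyp1F1 \<alpha> (1 + \<alpha>) (\<beta> * t)"
    using Gamma alpha_pos by (simp add: K_def Gamma_1_plus field_simps)
  finally show ?thesis .
qed

lemma ibnr_weight_expectation_sums:
  assumes "t \<ge> 0" "\<delta> \<ge> 0"
  shows "(\<lambda>i. \<integral>\<omega>. ibnr_weight t \<delta> (arrival_time J i \<omega>) (L i \<omega>) \<partial>M)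
           sums (lam * (\<beta> / (\<beta> + \<delta>)) * exp (- (\<beta> + \<delta>) * t) * t powr \<alpha> / Gamma (1 + \<alpha>)
                 * hyp1F1 \<alpha> (1 + \<alpha>) (\<beta> * t))"
proof -
  let ?r = "\<lambda>i. \<integral>\<omega>. ibnr_weight t \<delta> (arrival_time J i \<omega>) (L i \<omega>) \<partial>M"
  have "ennreal (?r i) = (\<integral>\<^sup>+ \<omega>. ennreal (ibnr_weight t \<delta> (arrival_time J i \<omega>) (L i \<omega>)) \<partial>M)" for i
    using ibnr_weight_bounds[OF assms]
    by (intro nn_integral_eq_integral[symmetric] integrable_const_bound[where B = 1]) auto
  then have "(\<lambda>i. ennreal (?r i)) sums ennreal (lam * (\<beta> / (\<beta> + \<delta>)) * exp (- (\<beta> + \<delta>) * t)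
      * t powr \<alpha> / Gamma (1 + \<alpha>) * hyp1F1 \<alpha> (1 + \<alpha>) (\<beta> * t))"
    using summable_sums[OF summableI, of "\<lambda>i. ennreal (?r i)"] sum_nn_integral_ibnr_weight[OF assms]
    by simp
  moreover have "0 \<le> lam * (\<beta> / (\<beta> + \<delta>)) * exp (- (\<beta> + \<delta>) * t) * t powr \<alpha> / Gamma (1 + \<alpha>)
      * hyp1F1 \<alpha> (1 + \<alpha>) (\<beta> * t)"
    using lam_pos beta_pos alpha_pos assms hyp1F1_plus1_nonneg[of \<alpha> "\<beta> * t"] Gamma_real_pos[of "1 + \<alpha>"]
    by simp
  ultimately show ?thesis
    using ibnr_weight_bounds[OF assms] by (simp add: integral_nonneg)
qed

lemma expectation_claim_ibnr_weight:
  fixes i :: nat and t \<delta> :: real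
  assumes "t \<ge> 0" "\<delta> \<ge> 0"
  defines "H \<equiv> \<lambda>\<omega>. ibnr_weight t \<delta> (arrival_time J i \<omega>) (L i \<omega>)"
  shows "integrable M (\<lambda>\<omega>. X i \<omega> * H \<omega>)"
    and "(\<integral>\<omega>. X i \<omega> * H \<omega> \<partial>M) = (\<integral>\<omega>. X 0 \<omega> \<partial>M) * (\<integral>\<omega>. H \<omega> \<partial>M)"
    and "(\<integral>\<omega>. norm (X i \<omega> * H \<omega>) \<partial>M) = (\<integral>\<omega>. \<bar>X 0 \<omega>\<bar> \<partial>M) * (\<integral>\<omega>. H \<omega> \<partial>M)"
proof -
  have H_bounds: "0 \<le> H \<omega>" "H \<omega> \<le> 1" for \<omega>
    unfolding H_def using ibnr_weight_bounds[OF assms(1,2)] by auto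
  have H_integrable: "integrable M H"
    using H_bounds by (intro integrable_const_bound[where B = 1]) (auto simp: H_def)
  have indep: "indep_var borel (X i) borel H"
    unfolding H_def by (rule indep_claim_ibnr_weight)
  have "indep_var borel (abs \<circ> X i) borel ((\<lambda>x. x) \<circ> H)"
    by (rule indep_var_compose[OF indep]) auto
  moreover have "abs \<circ> X i = (\<lambda>\<omega>. \<bar>X i \<omega>\<bar>)" "(\<lambda>x. x) \<circ> H = H"
    by (auto simp: fun_eq_iff)
  ultimately have indep_abs: "indep_var borel (\<lambda>\<omega>. \<bar>X i \<omega>\<bar>) borel H"
    by metis
  show "integrable M (\<lambda>\<omega>. X i \<omega> * H \<omega>)"
    using indep claims_integrable H_integrable by (rule indep_var_integrable)
  show "(\<integral>\<omega>. X i \<omega> * H \<omega> \<partial>M) = (\<integral>\<omega>. X 0 \<omega> \<partial>M) * (\<integral>\<omega>. H \<omega> \<partial>M)"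
    using indep_var_lebesgue_integral[OF indep claims_integrable H_integrable]
      integral_claim_comp[of "\<lambda>x. x" i] by simp
  have "(\<integral>\<omega>. norm (X i \<omega> * H \<omega>) \<partial>M) = (\<integral>\<omega>. \<bar>X i \<omega>\<bar> * H \<omega> \<partial>M)"
    using H_bounds by (simp add: abs_mult)
  also have "\<dots> = (\<integral>\<omega>. \<bar>X i \<omega>\<bar> \<partial>M) * (\<integral>\<omega>. H \<omega> \<partial>M)"
    using indep_abs claims_integrable H_integrable by (intro indep_var_lebesgue_integral) auto
  finally show "(\<integral>\<omega>. norm (X i \<omega> * H \<omega>) \<partial>M) = (\<integral>\<omega>. \<bar>X 0 \<omega>\<bar> \<partial>M) * (\<integral>\<omega>. H \<omega> \<partial>M)"
    using integral_claim_comp[of abs i] by simp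
qed

lemma expectation_Zdelta:
  assumes "t \<ge> 0" "\<delta> \<ge> 0"
  shows "(\<integral>\<omega>. Zdelta J X L \<delta> t \<omega> \<partial>M)
           = (\<integral>\<omega>. X 0 \<omega> \<partial>M) * lam * (\<integral>\<omega>. exp (- \<delta> * L 0 \<omega>) \<partial>M) * exp (- (\<beta> + \<delta>) * t)
             * t powr \<alpha> / Gamma (1 + \<alpha>) * hyp1F1 \<alpha> (1 + \<alpha>) (\<beta> * t)"
proof -
  note weights = ibnr_weight_expectation_sums[OF assms]
  note terms = expectation_claim_ibnr_weight[OF assms]
  have "summable (\<lambda>i. \<integral>\<omega>. norm (X i \<omega> * ibnr_weight t \<delta> (arrival_time J i \<omega>) (L i \<omega>)) \<partial>M)"
    using summable_mult[OF sums_summable[OF weights], of "\<integral>\<omega>. \<bar>X 0 \<omega>\<bar> \<partial>M"] by (simp only: terms(3))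
  then have "(\<integral>\<omega>. Zdelta J X L \<delta> t \<omega> \<partial>M)
      = (\<Sum>i. \<integral>\<omega>. X i \<omega> * ibnr_weight t \<delta> (arrival_time J i \<omega>) (L i \<omega>) \<partial>M)"
    unfolding Zdelta_eq_suminf_ibnr_weight by (rule integral_suminf_of_summable_norm[OF terms(1)])
  also have "\<dots> = (\<integral>\<omega>. X 0 \<omega> \<partial>M) * (lam * (\<beta> / (\<beta> + \<delta>)) * exp (- (\<beta> + \<delta>) * t)
      * t powr \<alpha> / Gamma (1 + \<alpha>) * hyp1F1 \<alpha> (1 + \<alpha>) (\<beta> * t))"
    using sums_mult[OF weights] by (simp add: terms sums_iff)
  finally show ?thesis
    unfolding delay_laplace_transform[OF assms(2)] by simp
qed

lemma expectation_Zdelta_asymp_equiv: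
  assumes "\<delta> \<ge> 0"
  shows "(\<lambda>t. \<integral>\<omega>. Zdelta J X L \<delta> t \<omega> \<partial>M) \<sim>[at_top]
           (\<lambda>t. (\<integral>\<omega>. X 0 \<omega> \<partial>M) * lam * (\<integral>\<omega>. exp (- \<delta> * L 0 \<omega>) \<partial>M) / (\<beta> * Gamma \<alpha>)
                * exp (- \<delta> * t) * t powr (\<alpha> - 1))"
proof -
  define C where "C = (\<integral>\<omega>. X 0 \<omega> \<partial>M) * lam * (\<integral>\<omega>. exp (- \<delta> * L 0 \<omega>) \<partial>M) / Gamma \<alpha>"
  have Gamma: "Gamma \<alpha> > 0"
    using alpha_pos by (rule Gamma_real_pos)
  have equiv: "(\<lambda>t. C * exp (- (\<beta> + \<delta>) * t) * (t powr \<alpha> / \<alpha> * hyp1F1 \<alpha> (1 + \<alpha>) (\<beta> * t)))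
      \<sim>[at_top] (\<lambda>t. C * exp (- (\<beta> + \<delta>) * t) * (exp (\<beta> * t) * t powr (\<alpha> - 1) / \<beta>))"
    by (rule asymp_equiv_mult[OF asymp_equiv_refl hyp1F1_plus1_asymp_equiv[OF alpha_pos beta_pos]])
  have closed_form: "(\<integral>\<omega>. Zdelta J X L \<delta> t \<omega> \<partial>M) = C * exp (- (\<beta> + \<delta>) * t) * (t powr \<alpha> / \<alpha> * hyp1F1 \<alpha> (1 + \<alpha>) (\<beta> * t))"
    if "t \<ge> 0" for t
    using that assms Gamma alpha_pos
    by (simp only: expectation_Zdelta C_def Gamma_1_plus) (simp add: field_simps)
  have left: "eventually (\<lambda>t. C * exp (- (\<beta> + \<delta>) * t) * (t powr \<alpha> / \<alpha> * hyp1F1 \<alpha> (1 + \<alpha>) (\<beta> * t))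
      = (\<integral>\<omega>. Zdelta J X L \<delta> t \<omega> \<partial>M)) at_top"
    using eventually_ge_at_top[of 0] by eventually_elim (rule closed_form[symmetric])
  have "exp (- (\<beta> + \<delta>) * t) * exp (\<beta> * t) = exp (- \<delta> * t)" for t
    by (simp add: mult_exp_exp algebra_simps)
  then have right: "eventually (\<lambda>t. C * exp (- (\<beta> + \<delta>) * t) * (exp (\<beta> * t) * t powr (\<alpha> - 1) / \<beta>)
      = (\<integral>\<omega>. X 0 \<omega> \<partial>M) * lam * (\<integral>\<omega>. exp (- \<delta> * L 0 \<omega>) \<partial>M) / (\<beta> * Gamma \<alpha>)
          * exp (- \<delta> * t) * t powr (\<alpha> - 1)) at_top"
    by (intro always_eventually allI) (simp only: C_def, simp add: field_simps)
  show ?thesis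
    using asymp_equiv_cong[OF left right] equiv by blast
qed

end

theorem proposition2:
  fixes M :: "'a measure" and lam \<alpha> \<beta> \<mu>1 :: real and J X L :: "nat \<Rightarrow> 'a \<Rightarrow> real"
  assumes "prob_space M"
    and "lam > 0" and "0 < \<alpha>" and "\<alpha> \<le> 1" and "\<beta> > 0"
    and "fractional_poisson_renewal M lam \<alpha> J"
    and "\<forall>i. X i \<in> borel_measurable M"
    and "\<forall>i. distr M borel (X i) = distr M borel (X 0)"
    and "integrable M (X 0)"
    and "\<mu>1 = (\<integral>\<omega>. X 0 \<omega> \<partial>M)"
    and "\<forall>i. L i \<in> borel_measurable M"
    and "\<forall>i. distr M borel (L i) = distr M borel (L 0)"
    and "\<forall>x\<ge>0. measure M {\<omega> \<in> space M. L 0 \<omega> > x} = exp (- \<beta> * x)"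
    and "prob_space.indep_vars M (\<lambda>_. borel) (case_sum J (case_sum X L)) UNIV"
  shows
    "(\<forall>t>0. (\<integral>\<omega>. Zdelta J X L 0 t \<omega> \<partial>M)
              = \<mu>1 * lam * exp (- \<beta> * t) * t powr \<alpha> / Gamma (1 + \<alpha>) * hyp1F1 \<alpha> (1 + \<alpha>) (\<beta> * t)
          \<and> \<mu>1 * lam * exp (- \<beta> * t) * t powr \<alpha> / Gamma (1 + \<alpha>) * hyp1F1 \<alpha> (1 + \<alpha>) (\<beta> * t)
              = \<mu>1 * exp (- \<beta> * t) * hyp1F1 \<alpha> (1 + \<alpha>) (\<beta> * t) * fpp_renewal_fun lam \<alpha> t)
     \<and> (\<forall>\<delta>>0. \<forall>t>0. (\<integral>\<omega>. Zdelta J X L \<delta> t \<omega> \<partial>M)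
              = \<mu>1 * lam * (\<integral>\<omega>. exp (- \<delta> * L 0 \<omega>) \<partial>M) * exp (- (\<beta> + \<delta>) * t) * t powr \<alpha>
                  / Gamma (1 + \<alpha>) * hyp1F1 \<alpha> (1 + \<alpha>) (\<beta> * t))
     \<and> (\<forall>\<delta>>0. (\<integral>\<omega>. exp (- \<delta> * L 0 \<omega>) \<partial>M) = \<beta> / (\<beta> + \<delta>))
     \<and> ((\<lambda>t. \<integral>\<omega>. Zdelta J X L 0 t \<omega> \<partial>M)
          \<sim>[at_top] (\<lambda>t. \<mu>1 * lam / (\<beta> * Gamma \<alpha>) * t powr (\<alpha> - 1)))
     \<and> (\<forall>t>0. \<mu>1 * lam / (\<beta> * Gamma \<alpha>) * t powr (\<alpha> - 1)
              = \<mu>1 * (\<integral>\<omega>. L 0 \<omega> \<partial>M) * (lam * t powr (\<alpha> - 1) / Gamma \<alpha>))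
     \<and> (\<forall>\<delta>>0. (\<lambda>t. \<integral>\<omega>. Zdelta J X L \<delta> t \<omega> \<partial>M)
          \<sim>[at_top] (\<lambda>t. \<mu>1 * lam * (\<integral>\<omega>. exp (- \<delta> * L 0 \<omega>) \<partial>M) / (\<beta> * Gamma \<alpha>)
                          * exp (- \<delta> * t) * t powr (\<alpha> - 1)))"
proof -
  interpret ibnr_model M lam \<alpha> \<beta> J X L
    by (intro ibnr_model.intro ibnr_model_axioms.intro) (fact assms)+
  have mean_claim: "\<mu>1 = (\<integral>\<omega>. X 0 \<omega> \<partial>M)"
    by (fact assms(10))
  have undiscounted: "\<forall>t>0. (\<integral>\<omega>. Zdelta J X L 0 t \<omega> \<partial>M)
      = \<mu>1 * lam * exp (- \<beta> * t) * t powr \<alpha> / Gamma (1 + \<alpha>) * hyp1F1 \<alpha> (1 + \<alpha>) (\<beta> * t)"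
    using expectation_Zdelta[of _ 0] by (simp add: mean_claim prob_space)
  have discounted: "\<forall>\<delta>>0. \<forall>t>0. (\<integral>\<omega>. Zdelta J X L \<delta> t \<omega> \<partial>M)
      = \<mu>1 * lam * (\<integral>\<omega>. exp (- \<delta> * L 0 \<omega>) \<partial>M) * exp (- (\<beta> + \<delta>) * t) * t powr \<alpha>
          / Gamma (1 + \<alpha>) * hyp1F1 \<alpha> (1 + \<alpha>) (\<beta> * t)"
    using expectation_Zdelta by (simp add: mean_claim)
  have undiscounted_asymp: "(\<lambda>t. \<integral>\<omega>. Zdelta J X L 0 t \<omega> \<partial>M)
      \<sim>[at_top] (\<lambda>t. \<mu>1 * lam / (\<beta> * Gamma \<alpha>) * t powr (\<alpha> - 1))"
    using expectation_Zdelta_asymp_equiv[of 0] by (simp add: mean_claim prob_space)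
  have discounted_asymp: "\<forall>\<delta>>0. (\<lambda>t. \<integral>\<omega>. Zdelta J X L \<delta> t \<omega> \<partial>M)
      \<sim>[at_top] (\<lambda>t. \<mu>1 * lam * (\<integral>\<omega>. exp (- \<delta> * L 0 \<omega>) \<partial>M) / (\<beta> * Gamma \<alpha>)
                      * exp (- \<delta> * t) * t powr (\<alpha> - 1))"
    unfolding mean_claim using expectation_Zdelta_asymp_equiv by simp
  have laplace: "\<forall>\<delta>>0. (\<integral>\<omega>. exp (- \<delta> * L 0 \<omega>) \<partial>M) = \<beta> / (\<beta> + \<delta>)"
    using delay_laplace_transform by simp
  have "\<mu>1 * lam / (\<beta> * Gamma \<alpha>) * t powr (\<alpha> - 1)
      = \<mu>1 * (\<integral>\<omega>. L 0 \<omega> \<partial>M) * (lam * t powr (\<alpha> - 1) / Gamma \<alpha>)" for t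
    using beta_pos by (simp add: delay_expectation)
  moreover have "\<mu>1 * lam * exp (- \<beta> * t) * t powr \<alpha> / Gamma (1 + \<alpha>) * hyp1F1 \<alpha> (1 + \<alpha>) (\<beta> * t)
      = \<mu>1 * exp (- \<beta> * t) * hyp1F1 \<alpha> (1 + \<alpha>) (\<beta> * t) * fpp_renewal_fun lam \<alpha> t" for t
    by (simp add: fpp_renewal_fun_def)
  ultimately show ?thesis
    using undiscounted discounted undiscounted_asymp discounted_asymp laplace by blast
qed

end
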